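(* Let $\mathfrak{H}$ be a Euclidean space and let $(\mathcal{X},\mathsf{S},\gamma,(\Lambda_{a})_{a\in\mathcal{A}})$ be a spectral decomposition system for $\mathfrak{H}$ such that the set $\{\Lambda_a\}_{a\in\mathcal{A}}$ is closed in $\mathscr{L}(\mathcal{X},\mathfrak{H})$, and suppose in addition that $\mathsf{S}$ is a finite group. Then for all $X,Y\in\mathfrak{H}$, \[ \gamma(X+Y)-\gamma(X)\in\operatorname{conv}\bigl(\mathsf{S}\cdot\gamma(Y)\bigr), \] where $\mathsf{S}\cdot z=\{\mathsf{s}\cdot z:\mathsf{s}\in\mathsf{S}\}$.
   Context: A Euclidean space is a finite-dimensional real Hilbert space; $\mathscr{L}(\mathcal{X},\mathfrak{H})$ carries the operator-norm topology. A spectral decomposition system for a Euclidean space $\mathfrak{H}$ is a tuple $(\mathcal{X},\mathsf{S},\gamma,(\Lambda_a)_{a\in\mathcal{A}})$ where $\mathcal{X}$ is a Euclidean space, $\mathsf{S}$ is a group acting on $\mathcal{X}$ such that each map $x\mapsto \mathsf{s}\cdot x$ is a linear isometry, $\gamma\colon\mathfrak{H}\to\mathcal{X}$ is a mapping, and each $\Lambda_a\colon\mathcal{X}\to\mathfrak{H}$ is a linear isometry, such that: [A] there exists a mapping $\tau\colon\mathcal{X}\to\mathcal{X}$ with $\tau(\mathsf{s}\cdot x)=\tau(x)$ for all $\mathsf{s},x$, $\tau(x)\in\mathsf{S}\cdot x$ for all $x$, and $\gamma\circ\Lambda_a=\tau$ for all $a\in\mathcal{A}$; [B] for every $X\in\mathfrak{H}$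 there exists $a\in\mathcal{A}$ with $X=\Lambda_a\gamma(X)$; [C] $\langle X,Y\rangle\le\langle\gamma(X),\gamma(Y)\rangle$ for all $X,Y\in\mathfrak{H}$. *)

theory Defs
  imports "HOL-Analysis.Analysis" "HOL-Algebra.Group"
begin

definition isometric_linear_action :: "('g, 'm) monoid_scheme \<Rightarrow> ('g \<Rightarrow> 'x::euclidean_space \<Rightarrow> 'x) \<Rightarrow> bool" where
  "isometric_linear_action G act \<longleftrightarrow>
     group G \<and>
     (\<forall>x. act \<one>\<^bsub>G\<^esub> x = x) \<and>
     (\<forall>s\<in>carrier G. \<forall>t\<in>carrier G. \<forall>x. act (s \<otimes>\<^bsub>G\<^esub> t) x = act s (act t x)) \<and>
     (\<forall>s\<in>carrier G. linear (act s) \<and> (\<forall>x. norm (act s x) = norm x))"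

definition orbit :: "('g, 'm) monoid_scheme \<Rightarrow> ('g \<Rightarrow> 'x \<Rightarrow> 'x) \<Rightarrow> 'x \<Rightarrow> 'x set" where
  "orbit G act x = (\<lambda>s. act s x) ` carrier G"

definition spectral_decomposition_system ::
  "('g, 'm) monoid_scheme \<Rightarrow> ('g \<Rightarrow> 'x::euclidean_space \<Rightarrow> 'x) \<Rightarrow> ('h::euclidean_space \<Rightarrow> 'x)
    \<Rightarrow> 'a set \<Rightarrow> ('a \<Rightarrow> ('x \<Rightarrow>\<^sub>L 'h)) \<Rightarrow> bool" where
  "spectral_decomposition_system G act \<gamma> A \<Lambda> \<longleftrightarrow>
     isometric_linear_action G act \<and>
     (\<forall>a\<in>A. \<forall>x. norm (blinfun_apply (\<Lambda> a) x) = norm x) \<and>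
     (\<exists>\<tau>::'x \<Rightarrow> 'x.
        (\<forall>s\<in>carrier G. \<forall>x. \<tau> (act s x) = \<tau> x) \<and>
        (\<forall>x. \<tau> x \<in> orbit G act x) \<and>
        (\<forall>a\<in>A. \<gamma> \<circ> blinfun_apply (\<Lambda> a) = \<tau>)) \<and>
     (\<forall>X. \<exists>a\<in>A. X = blinfun_apply (\<Lambda> a) (\<gamma> X)) \<and>
     (\<forall>X Y. inner X Y \<le> inner (\<gamma> X) (\<gamma> Y))"

end

theory Submission
  imports Defs
begin

(* For u fixed by tau, axiom [C] together with gamma (Lambda_a u') = tau u' shows that
   Z \<mapsto> <u, gamma Z> is the pointwise maximum of the linear functionals <Lambda_a u, Z>, the
   maximum being attained at every a with Z = Lambda_a (gamma Z).  Along the segment from X to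
   X + Y this is a convex function of t with subgradients <Lambda_a u, Y>, so the increment
   <u, gamma (X + Y) - gamma X> is the limit of the Riemann sums of these subgradients.
   Fixing one such a for every node, these Riemann sums are <u, M_N>, where M_N is an average of
   the vectors Lambda_a^* Y (adjoints), and each Lambda_a^* Y lies in conv (S . gamma Y) by [C] again.
   The fixed points of tau span the whole space, because their images under the finitely many
   s in S cover it; hence M_N tends to gamma (X + Y) - gamma X, which therefore lies in the
   closed set conv (S . gamma Y). *)

lemma linear_blinfun_apply: "linear (blinfun_apply f)"
  by (rule bounded_linear.linear[OF blinfun.bounded_linear_right])

lemma span_eq_UNIV_if_finitely_many_linear_images_cover:
  fixes S :: "'a::euclidean_space set" and F :: "('a \<Rightarrow> 'a) set"
  assumes "finite F" and "\<And>f. f \<in> F \<Longrightarrow> linear f" and cover: "UNIV \<subseteq> (\<Union>f\<in>F. f ` S)"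
  shows "span S = UNIV"
proof (rule ccontr)
  assume "span S \<noteq> UNIV"
  then have "dim S < DIM('a)"
    using dim_eq_full[of S] dim_subset_UNIV[of S] by linarith
  then have "negligible (f ` span S)" if "f \<in> F" for f
    using dim_image_le[OF assms(2)[OF that], of "span S"] by (intro negligible_lowdim) simp
  with \<open>finite F\<close> have "negligible (\<Union>f\<in>F. f ` span S)"
    by (intro negligible_Union) auto
  moreover have "(\<Union>f\<in>F. f ` S) \<subseteq> (\<Union>f\<in>F. f ` span S)"
    by (intro UN_mono order_refl image_mono span_superset)
  with cover have "UNIV \<subseteq> (\<Union>f\<in>F. f ` span S)"
    by (rule order.trans)
  ultimately have "negligible (UNIV :: 'a set)"
    by (rule negligible_subset)
  then show False
    by simp
qed

lemma tendsto_if_inner_tendsto_on_spanning_set: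
  fixes f :: "'b \<Rightarrow> 'a::euclidean_space"
  assumes "span S = UNIV" and "\<And>u. u \<in> S \<Longrightarrow> ((\<lambda>n. u \<bullet> f n) \<longlongrightarrow> u \<bullet> l) F"
  shows "(f \<longlongrightarrow> l) F"
proof -
  define T where "T = {u. ((\<lambda>n. u \<bullet> f n) \<longlongrightarrow> u \<bullet> l) F}"
  have "subspace T"
    unfolding subspace_def T_def
    by (simp add: inner_add_left tendsto_add tendsto_mult_left)
  then have "span S \<subseteq> T"
    using assms(2) by (intro span_minimal) (auto simp: T_def)
  with assms(1) have "((\<lambda>n. i \<bullet> f n) \<longlongrightarrow> i \<bullet> l) F" for i
    by (auto simp: T_def)
  then have "((\<lambda>n. f n \<bullet> i) \<longlongrightarrow> l \<bullet> i) F" for i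
    by (simp add: inner_commute[of _ i])
  then show ?thesis
    using tendsto_componentwise_iff[of f l F] by blast
qed

lemma subgradient_Riemann_sum_bounds:
  fixes f q :: "real \<Rightarrow> real" and N :: nat
  assumes subgradient: "\<And>t t'. f t + (t' - t) * q t \<le> f t'"
    and bounded: "\<And>t. \<bar>q t\<bar> \<le> c" and "N > 0"
  shows "(\<Sum>k<N. q (k / N)) / N \<le> f 1 - f 0"
    and "f 1 - f 0 \<le> (\<Sum>k<N. q (k / N)) / N + 2 * c / N"
proof -
  define F where "F k = f (k / N)" for k :: nat
  define Q where "Q k = q (k / N)" for k :: nat
  have "(\<Sum>k<N. F (Suc k) - F k) = F N - F 0"
    by (rule sum_lessThan_telescope)
  then have increment: "f 1 - f 0 = (\<Sum>k<N. F (Suc k) - F k)"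
    using \<open>N > 0\<close> by (simp add: F_def)
  have "Q k / N \<le> F (Suc k) - F k" for k
    using subgradient[of "k / N" "Suc k / N"] \<open>N > 0\<close> by (simp add: F_def Q_def field_simps)
  then have lower: "(\<Sum>k<N. Q k / N) \<le> f 1 - f 0"
    unfolding increment by (rule sum_mono)
  have "F (Suc k) - F k \<le> Q (Suc k) / N" for k
    using subgradient[of "Suc k / N" "k / N"] \<open>N > 0\<close> by (simp add: F_def Q_def field_simps)
  then have "f 1 - f 0 \<le> (\<Sum>k<N. Q (Suc k) / N)"
    unfolding increment by (rule sum_mono)
  also have "\<dots> = (\<Sum>k<N. Q k / N) + (Q N - Q 0) / N"
    using sum_lessThan_telescope[of "\<lambda>k. Q k / N" N]
    by (simp add: sum_subtractf diff_divide_distrib)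
  also have "(Q N - Q 0) / N \<le> 2 * c / N"
    using bounded[of "N / N"] bounded[of "0 / N"] \<open>N > 0\<close>
    by (intro divide_right_mono) (auto simp: Q_def)
  finally have upper: "f 1 - f 0 \<le> (\<Sum>k<N. Q k / N) + 2 * c / N"
    by simp
  have "(\<Sum>k<N. Q k / N) = (\<Sum>k<N. q (k / N)) / N"
    by (simp add: Q_def sum_divide_distrib)
  with lower upper show "(\<Sum>k<N. q (k / N)) / N \<le> f 1 - f 0"
    and "f 1 - f 0 \<le> (\<Sum>k<N. q (k / N)) / N + 2 * c / N"
    by simp_all
qed

lemma subgradient_Riemann_sums_tendsto:
  fixes f q :: "real \<Rightarrow> real"
  assumes "\<And>t t'. f t + (t' - t) * q t \<le> f t'" and "\<And>t. \<bar>q t\<bar> \<le> c"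
  shows "(\<lambda>N. (\<Sum>k<N. q (real k / real N)) / real N) \<longlonglongrightarrow> f 1 - f 0"
proof -
  have lower: "\<forall>\<^sub>F N in sequentially. f 1 - f 0 - 2 * c / N \<le> (\<Sum>k<N. q (k / N)) / N"
    and upper: "\<forall>\<^sub>F N in sequentially. (\<Sum>k<N. q (k / N)) / N \<le> f 1 - f 0"
    using subgradient_Riemann_sum_bounds[OF assms]
    by (auto intro!: eventually_sequentiallyI[of 1] simp: algebra_simps)
  have "(\<lambda>N. f 1 - f 0 - 2 * c / real N) \<longlonglongrightarrow> f 1 - f 0"
    using tendsto_diff[OF tendsto_const lim_const_over_n] by simp
  from tendsto_sandwich[OF lower upper this tendsto_const] show ?thesis .
qed

locale spectral_decomposition_setting =
  fixes G :: "('g, 'm) monoid_scheme"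
    and act :: "'g \<Rightarrow> 'x::euclidean_space \<Rightarrow> 'x"
    and \<gamma> :: "'h::euclidean_space \<Rightarrow> 'x"
    and A :: "'a set"
    and \<Lambda> :: "'a \<Rightarrow> ('x \<Rightarrow>\<^sub>L 'h)"
    and \<tau> :: "'x \<Rightarrow> 'x"
  assumes action: "isometric_linear_action G act"
    and norm_\<Lambda>: "\<And>a x. a \<in> A \<Longrightarrow> norm (\<Lambda> a x) = norm x"
    and \<tau>_act: "\<And>s x. s \<in> carrier G \<Longrightarrow> \<tau> (act s x) = \<tau> x"
    and \<tau>_in_orbit: "\<And>x. \<tau> x \<in> orbit G act x"
    and \<gamma>_\<Lambda>: "\<And>a x. a \<in> A \<Longrightarrow> \<gamma> (\<Lambda> a x) = \<tau> x"
    and decomposition: "\<And>X. \<exists>a\<in>A. X = \<Lambda> a (\<gamma> X)"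
    and inner_le_inner_\<gamma>: "\<And>X Y. X \<bullet> Y \<le> \<gamma> X \<bullet> \<gamma> Y"
    and finite_group: "finite (carrier G)"

lemma spectral_decomposition_setting_if_system:
  assumes "spectral_decomposition_system G act \<gamma> A \<Lambda>" and "finite (carrier G)"
  obtains \<tau> where "spectral_decomposition_setting G act \<gamma> A \<Lambda> \<tau>"
proof -
  have "spectral_decomposition_setting G act \<gamma> A \<Lambda> \<tau>"
    if "\<forall>s\<in>carrier G. \<forall>x. \<tau> (act s x) = \<tau> x" and "\<forall>x. \<tau> x \<in> orbit G act x"
      and "\<forall>a\<in>A. \<gamma> \<circ> blinfun_apply (\<Lambda> a) = \<tau>" for \<tau>
    using assms that
    unfolding spectral_decomposition_system_def spectral_decomposition_setting_def
    by (simp add: fun_eq_iff)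
  with assms(1) that show thesis
    unfolding spectral_decomposition_system_def by blast
qed

context spectral_decomposition_setting
begin

lemma group: "group G"
  and act_one: "act \<one>\<^bsub>G\<^esub> x = x"
  and act_mult: "s \<in> carrier G \<Longrightarrow> t \<in> carrier G \<Longrightarrow> act (s \<otimes>\<^bsub>G\<^esub> t) x = act s (act t x)"
  using action by (simp_all add: isometric_linear_action_def)

lemma orthogonal_transformation_act: "s \<in> carrier G \<Longrightarrow> orthogonal_transformation (act s)"
  using action by (simp add: isometric_linear_action_def orthogonal_transformation)

lemma act_inv_act:
  assumes "s \<in> carrier G"
  shows "act (inv\<^bsub>G\<^esub> s) (act s x) = x" and "act s (act (inv\<^bsub>G\<^esub> s) x) = x"
  using assms group.l_inv[OF group] group.r_inv[OF group] group.inv_closed[OF group]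
  by (simp_all flip: act_mult add: act_one)

lemma inner_act_left:
  assumes "s \<in> carrier G"
  shows "act s x \<bullet> y = x \<bullet> act (inv\<^bsub>G\<^esub> s) y"
proof -
  have "act s x \<bullet> y = act s x \<bullet> act s (act (inv\<^bsub>G\<^esub> s) y)"
    using act_inv_act(2)[OF assms] by simp
  also have "\<dots> = x \<bullet> act (inv\<^bsub>G\<^esub> s) y"
    using orthogonal_transformation_act[OF assms] by (simp add: orthogonal_transformation_def)
  finally show ?thesis .
qed

lemma obtain_act_eq_\<tau>:
  obtains s where "s \<in> carrier G" and "\<tau> x = act s x"
  using \<tau>_in_orbit[of x] by (auto simp: orbit_def)

lemma span_fixed_points_\<tau>: "span {u. \<tau> u = u} = UNIV"
proof (rule span_eq_UNIV_if_finitely_many_linear_images_cover)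
  show "finite (act ` carrier G)"
    using finite_group by simp
  show "linear f" if "f \<in> act ` carrier G" for f
    using that orthogonal_transformation_act by (auto simp: orthogonal_transformation_def)
  show "UNIV \<subseteq> (\<Union>f\<in>act ` carrier G. f ` {u. \<tau> u = u})"
  proof
    fix x
    obtain s where s: "s \<in> carrier G" and "\<tau> x = act s x"
      by (rule obtain_act_eq_\<tau>)
    then have "x = act (inv\<^bsub>G\<^esub> s) (\<tau> x)" and "\<tau> (\<tau> x) = \<tau> x"
      by (simp_all add: act_inv_act \<tau>_act)
    moreover have "inv\<^bsub>G\<^esub> s \<in> carrier G"
      using s group by (simp add: group.inv_closed)
    ultimately show "x \<in> (\<Union>f\<in>act ` carrier G. f ` {u. \<tau> u = u})"
      by blast
  qed
qed

lemma orthogonal_transformation_\<Lambda>: "a \<in> A \<Longrightarrow> orthogonal_transformation (\<Lambda> a)"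
  by (simp add: orthogonal_transformation norm_\<Lambda> linear_blinfun_apply)

lemma inner_\<Lambda>_le_inner_\<tau>: "a \<in> A \<Longrightarrow> \<Lambda> a u \<bullet> Z \<le> \<tau> u \<bullet> \<gamma> Z"
  using inner_le_inner_\<gamma>[of "\<Lambda> a u" Z] by (simp add: \<gamma>_\<Lambda>)

lemma inner_\<Lambda>_le_inner_orbit:
  assumes "a \<in> A"
  obtains z where "z \<in> orbit G act (\<gamma> Y)" and "\<Lambda> a v \<bullet> Y \<le> v \<bullet> z"
proof -
  obtain s where s: "s \<in> carrier G" and "\<tau> v = act s v"
    by (rule obtain_act_eq_\<tau>)
  then have "\<Lambda> a v \<bullet> Y \<le> v \<bullet> act (inv\<^bsub>G\<^esub> s) (\<gamma> Y)"
    using inner_\<Lambda>_le_inner_\<tau>[OF assms, of v Y] by (simp add: inner_act_left)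
  moreover have "act (inv\<^bsub>G\<^esub> s) (\<gamma> Y) \<in> orbit G act (\<gamma> Y)"
    using s group by (simp add: orbit_def group.inv_closed)
  ultimately show thesis
    using that by blast
qed

lemma closed_convex_hull_orbit: "closed (convex hull (orbit G act x))"
  using finite_group
  by (simp add: orbit_def compact_imp_closed compact_convex_hull finite_imp_compact)

lemma adjoint_\<Lambda>_in_convex_hull_orbit:
  assumes "a \<in> A"
  shows "adjoint (\<Lambda> a) Y \<in> convex hull (orbit G act (\<gamma> Y))"
proof (rule ccontr)
  assume "adjoint (\<Lambda> a) Y \<notin> convex hull (orbit G act (\<gamma> Y))"
  then obtain w b where w: "w \<bullet> adjoint (\<Lambda> a) Y < b"
    and orbit_above: "\<forall>z\<in>convex hull (orbit G act (\<gamma> Y)). b < w \<bullet> z"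
    using separating_hyperplane_closed_point[OF convex_convex_hull closed_convex_hull_orbit]
    by blast
  obtain z where "z \<in> orbit G act (\<gamma> Y)" and "\<Lambda> a (- w) \<bullet> Y \<le> - w \<bullet> z"
    using inner_\<Lambda>_le_inner_orbit[OF assms] .
  moreover have "\<Lambda> a (- w) \<bullet> Y = - w \<bullet> adjoint (\<Lambda> a) Y"
    by (simp add: adjoint_works blinfun.minus_right linear_blinfun_apply)
  ultimately show False
    using w orbit_above hull_subset by fastforce
qed

lemma inner_\<gamma>_subgradient:
  assumes "\<tau> u = u" and "a \<in> A" and "Z = \<Lambda> a (\<gamma> Z)"
  shows "u \<bullet> \<gamma> Z + \<Lambda> a u \<bullet> (Z' - Z) \<le> u \<bullet> \<gamma> Z'"
proof -
  have "u \<bullet> \<gamma> Z = \<Lambda> a u \<bullet> Z"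
    using orthogonal_transformation_\<Lambda>[OF assms(2)] assms(3)
    by (metis orthogonal_transformation_def)
  moreover have "\<Lambda> a u \<bullet> Z' \<le> u \<bullet> \<gamma> Z'"
    using inner_\<Lambda>_le_inner_\<tau>[OF assms(2)] assms(1) by metis
  ultimately show ?thesis
    by (simp add: inner_diff_right)
qed

lemma inner_\<gamma>_increment_as_limit_of_Riemann_sums:
  assumes "\<tau> u = u" and "\<And>Z. \<alpha> Z \<in> A" and "\<And>Z. Z = \<Lambda> (\<alpha> Z) (\<gamma> Z)"
  shows "(\<lambda>N. (\<Sum>k<N. \<Lambda> (\<alpha> (X + (real k / real N) *\<^sub>R Y)) u \<bullet> Y) / real N)
    \<longlonglongrightarrow> u \<bullet> (\<gamma> (X + Y) - \<gamma> X)"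
proof -
  define f where "f t = u \<bullet> \<gamma> (X + t *\<^sub>R Y)" for t
  define q where "q t = \<Lambda> (\<alpha> (X + t *\<^sub>R Y)) u \<bullet> Y" for t
  have "f t + (t' - t) * q t \<le> f t'" for t t'
    using inner_\<gamma>_subgradient[OF assms(1,2,3), of "X + t *\<^sub>R Y" "X + t' *\<^sub>R Y"]
    by (simp add: f_def q_def algebra_simps)
  moreover have "\<bar>q t\<bar> \<le> norm u * norm Y" for t
    using Cauchy_Schwarz_ineq2[of "\<Lambda> (\<alpha> (X + t *\<^sub>R Y)) u" Y]
    by (simp add: q_def norm_\<Lambda> assms(2))
  ultimately have "(\<lambda>N. (\<Sum>k<N. q (real k / real N)) / real N) \<longlonglongrightarrow> f 1 - f 0"
    by (rule subgradient_Riemann_sums_tendsto)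
  then show ?thesis
    by (simp add: f_def q_def inner_diff_right)
qed

lemma \<gamma>_increment_in_convex_hull_orbit:
  "\<gamma> (X + Y) - \<gamma> X \<in> convex hull (orbit G act (\<gamma> Y))"
proof -
  obtain \<alpha> where \<alpha>: "\<And>Z. \<alpha> Z \<in> A" "\<And>Z. Z = \<Lambda> (\<alpha> Z) (\<gamma> Z)"
    using decomposition by metis
  define M where
    "M N = (\<Sum>k<N. (1 / real N) *\<^sub>R adjoint (\<Lambda> (\<alpha> (X + (real k / real N) *\<^sub>R Y))) Y)" for N
  have "M N \<in> convex hull (orbit G act (\<gamma> Y))" if "N > 0" for N
    unfolding M_def using that
    by (intro convex_sum) (auto simp: \<alpha>(1) adjoint_\<Lambda>_in_convex_hull_orbit)
  moreover have "M \<longlonglongrightarrow> \<gamma> (X + Y) - \<gamma> X"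
  proof (rule tendsto_if_inner_tendsto_on_spanning_set[OF span_fixed_points_\<tau>])
    fix u assume "u \<in> {u. \<tau> u = u}"
    then have "(\<lambda>N. (\<Sum>k<N. \<Lambda> (\<alpha> (X + (real k / real N) *\<^sub>R Y)) u \<bullet> Y) / real N)
        \<longlonglongrightarrow> u \<bullet> (\<gamma> (X + Y) - \<gamma> X)"
      using \<alpha> by (intro inner_\<gamma>_increment_as_limit_of_Riemann_sums) auto
    then show "(\<lambda>N. u \<bullet> M N) \<longlonglongrightarrow> u \<bullet> (\<gamma> (X + Y) - \<gamma> X)"
      by (simp add: M_def inner_sum_right sum_divide_distrib adjoint_works linear_blinfun_apply)
  qed
  ultimately show ?thesis
    using closed_convex_hull_orbit
    by (intro Lim_in_closed_set[of _ M]) (auto intro: eventually_sequentiallyI[of 1])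
qed

end

theorem theorem5p1:
  fixes G :: "('g, 'm) monoid_scheme"
    and act :: "'g \<Rightarrow> 'x::euclidean_space \<Rightarrow> 'x"
    and \<gamma> :: "'h::euclidean_space \<Rightarrow> 'x"
    and A :: "'a set"
    and \<Lambda> :: "'a \<Rightarrow> ('x \<Rightarrow>\<^sub>L 'h)"
  assumes "spectral_decomposition_system G act \<gamma> A \<Lambda>"
    and "closed (\<Lambda> ` A)"
    and "finite (carrier G)"
  shows "\<forall>X Y. \<gamma> (X + Y) - \<gamma> X \<in> convex hull (orbit G act (\<gamma> Y))"
proof -
  obtain \<tau> where "spectral_decomposition_setting G act \<gamma> A \<Lambda> \<tau>"
    using spectral_decomposition_setting_if_system[OF assms(1,3)] .
  then show ?thesis
    using spectral_decomposition_setting.\<gamma>_increment_in_convex_hull_orbit by blast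
qed

end
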